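(* Let $q$ be a prime power and $n$ a positive integer. If there exists an element of $\mathbb{F}_{q^n}$ that is primitive and $2$-normal over $\mathbb{F}_q$, then $n\geq 4$, and if moreover $n=4$ then $q\equiv 1\pmod 4$.
   Context: An element of $\mathbb{F}_{q^n}$ is primitive if it generates $\mathbb{F}_{q^n}^*$. For $\alpha\in\mathbb{F}_{q^n}$ let $g_\alpha(x)=\sum_{i=0}^{n-1}\alpha^{q^i}x^{n-1-i}$; $\alpha$ is $k$-normal over $\mathbb{F}_q$ if $\gcd(x^n-1,g_\alpha(x))$ in $\mathbb{F}_{q^n}[x]$ has degree $k$. *)

theory Defs
  imports "HOL-Computational_Algebra.Computational_Algebra"
begin

text \<open>We model F_{q^n} as a finite field type 'a with CARD('a) = q^n.
  The q-Frobenius x \<mapsto> x^q generates Gal(F_{q^n}/F_q), so the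
  conjugates alpha^(q^i) are as in the paper.\<close>

definition primitive_elem :: "'a::{field,finite} \<Rightarrow> bool" where
  "primitive_elem \<alpha> \<longleftrightarrow> \<alpha> \<noteq> 0 \<and> (\<forall>y::'a. y \<noteq> 0 \<longrightarrow> (\<exists>k::nat. y = \<alpha> ^ k))"

definition g_poly :: "nat \<Rightarrow> nat \<Rightarrow> 'a::field \<Rightarrow> 'a poly" where
  "g_poly q n \<alpha> = (\<Sum>i<n. monom (\<alpha> ^ (q ^ i)) (n - 1 - i))"

definition k_normal :: "nat \<Rightarrow> nat \<Rightarrow> nat \<Rightarrow> 'a::field_gcd \<Rightarrow> bool" where
  "k_normal q n k \<alpha> \<longleftrightarrow>
     degree (gcd (monom 1 n - 1) (g_poly q n \<alpha>)) = k"

end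

theory Submission
  imports Defs "HOL-Algebra.FiniteProduct"
begin

text \<open>Write \<open>a\<^sub>i = \<alpha>^(q^i)\<close>, indices mod \<open>n\<close>. If \<open>D = gcd(x^n - 1, g\<^sub>\<alpha>)\<close> has degree 2, the
  cofactor \<open>h = (x^n - 1)/D\<close> has degree \<open>n - 2\<close> and \<open>g\<^sub>\<alpha> h\<close> is a multiple of \<open>x^n - 1\<close>,
  which says that \<open>\<Sum>\<^sub>j h\<^sub>j a\<^sub>i\<^sub>+\<^sub>j = 0\<close> for every \<open>i\<close>. Since \<open>deg g\<^sub>\<alpha> \<le> n - 1\<close>, this forces \<open>n \<ge> 3\<close>.
  The recurring obstruction is an eigenvector relation \<open>\<alpha>^Q = l \<alpha>\<close> for the Frobenius
  \<open>x \<mapsto> x^Q\<close> of a field with \<open>Q^e\<close> elements: it gives \<open>l^e = 1\<close>, so \<open>\<alpha>\<close> has order dividing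
  \<open>e (Q - 1) < Q^e - 1\<close> and cannot be primitive.

  For \<open>n = 3\<close>, \<open>h\<close> is linear and the relations are exactly such an eigenvector relation.
  For \<open>n = 4\<close>, normalise \<open>h = x^2 + b x + c\<close>; applying Frobenius to \<open>c a\<^sub>i + b a\<^sub>i\<^sub>+\<^sub>1 + a\<^sub>i\<^sub>+\<^sub>2 = 0\<close>
  and subtracting the next relation shows that \<open>b, c \<in> \<bbbF>\<^sub>q\<close> unless \<open>\<alpha>\<close> is a Frobenius eigenvector.
  As \<open>h\<close> divides \<open>x^4 - 1\<close>, either \<open>b = 0\<close>, and then \<open>\<alpha>\<close> is an eigenvector of \<open>x \<mapsto> x^(q^2)\<close>,
  or \<open>b\<^sup>2 = 2 c\<close> and \<open>c\<^sup>2 = -1\<close>, so \<open>\<bbbF>\<^sub>q\<close> has odd characteristic and contains an element of order 4,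
  i.e. \<open>q \<equiv> 1 (mod 4)\<close>.\<close>

lemma of_nat_card_UNIV_eq_0: "of_nat (card (UNIV :: 'a set)) = (0 :: 'a :: {ring_1,finite})"
proof -
  have "(\<Sum>x\<in>UNIV. x + 1) = (\<Sum>x\<in>(UNIV :: 'a set). x)"
    by (rule sum.reindex_bij_witness[of _ "\<lambda>y. y - 1" "\<lambda>y. y + 1"]) auto
  then show ?thesis
    by (simp add: sum.distrib)
qed

lemma CHAR_eq_prime_if_card_eq_power:
  assumes "prime p" and "card (UNIV :: 'a :: {field,finite} set) = p ^ k"
  shows "CHAR('a) = p"
proof -
  have "prime CHAR('a)"
    by (simp add: finite_imp_CHAR_pos prime_CHAR_semidom)
  moreover have "CHAR('a) dvd p ^ k"
    using of_nat_card_UNIV_eq_0[where 'a = 'a] assms(2) by (metis of_nat_eq_0_iff_char_dvd)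
  ultimately show ?thesis
    using assms(1) by (metis prime_dvd_power primes_dvd_imp_eq)
qed

text \<open>The library's \<open>finite_field_power_card_eq_same\<close> needs the type class \<open>finite_field\<close>,
  which a type variable of sort \<open>{field,finite}\<close> does not have.\<close>

lemma power_card_UNIV_eq_self: "(x :: 'a :: {field,finite}) ^ card (UNIV :: 'a set) = x"
proof (cases "x = 0")
  case False
  define G :: "'a monoid" where "G = \<lparr>carrier = UNIV - {0}, monoid.mult = (*), one = 1\<rparr>"
  interpret comm_group G
    by (rule comm_groupI) (auto simp: G_def mult_ac intro!: bexI[of _ "inverse x" for x])
  have pow: "y [^]\<^bsub>G\<^esub> n = y ^ n" for y :: 'a and n :: nat
    by (induction n) (simp_all add: G_def mult.commute)
  have "x [^]\<^bsub>G\<^esub> card (carrier G) = \<one>\<^bsub>G\<^esub>"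
    by (rule power_order_eq_one) (use False in \<open>simp_all add: G_def\<close>)
  then have "x ^ card (UNIV - {0 :: 'a}) = 1"
    by (simp only: pow) (simp add: G_def)
  then have "x ^ Suc (card (UNIV - {0 :: 'a})) = x"
    by simp
  moreover have "Suc (card (UNIV - {0 :: 'a})) = card (UNIV :: 'a set)"
    using finite_UNIV_card_ge_0[where 'a = 'a] by (simp add: card_Diff_singleton)
  ultimately show ?thesis
    by simp
qed (use finite_UNIV_card_ge_0[where 'a = 'a] in simp)

lemma mult_pred_less_power_pred:
  fixes Q e :: nat
  assumes "2 \<le> Q" and "2 \<le> e"
  shows "e * (Q - 1) < Q ^ e - 1"
  using assms(2)
proof (induction e rule: dec_induct)
  case base
  have "2 * (Q - 1) < (Q + 1) * (Q - 1)"
    using assms(1) by (intro mult_strict_right_mono) auto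
  also have "\<dots> = Q ^ 2 - 1"
    by (simp add: power2_eq_square algebra_simps)
  finally show ?case .
next
  case (step e)
  have "Q ^ e \<ge> 1"
    using assms(1) by simp
  then have "Q ^ Suc e - 1 = (Q ^ e - 1) + Q ^ e * (Q - 1)"
    using assms(1) by (cases Q) (simp_all add: algebra_simps)
  moreover have "Q - 1 \<le> Q ^ e * (Q - 1)"
    using \<open>Q ^ e \<ge> 1\<close> by simp
  ultimately show ?case
    unfolding mult_Suc using step.IH by linarith
qed

lemma Frobenius_add:
  fixes x y :: "'a :: {field,finite}"
  assumes "prime p" and "card (UNIV :: 'a set) = p ^ k" and "q = p ^ m"
  shows "(x + y) ^ q = x ^ q + y ^ q"
  using freshmans_dream'[of q m x y] CHAR_eq_prime_if_card_eq_power[OF assms(1,2)] assms(1,3)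
  by simp

lemma primitive_elem_card_le_if_power_eq_1:
  assumes "primitive_elem (\<alpha> :: 'a :: {field,finite})" and "\<alpha> ^ k = 1" and "k > 0"
  shows "card (UNIV :: 'a set) - 1 \<le> k"
proof -
  have "UNIV - {0} \<subseteq> (\<lambda>j. \<alpha> ^ j) ` {..<k}"
  proof
    fix y :: 'a
    assume "y \<in> UNIV - {0}"
    then obtain j where "y = \<alpha> ^ j"
      using assms(1) unfolding primitive_elem_def by auto
    also have "\<dots> = \<alpha> ^ (k * (j div k) + j mod k)"
      by simp
    also have "\<dots> = \<alpha> ^ (j mod k)"
      by (simp only: power_add power_mult assms(2) power_one mult_1)
    finally show "y \<in> (\<lambda>j. \<alpha> ^ j) ` {..<k}"
      using assms(3) by auto
  qed
  then have "card (UNIV - {0 :: 'a}) \<le> card ((\<lambda>j. \<alpha> ^ j) ` {..<k})"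
    by (intro card_mono) auto
  also have "\<dots> \<le> k"
    using card_image_le[of "{..<k}"] by simp
  finally show ?thesis
    by (simp add: card_Diff_singleton)
qed

lemma primitive_elem_not_Frobenius_eigenvector:
  fixes \<alpha> l :: "'a :: {field,finite}"
  assumes "primitive_elem \<alpha>" and "card (UNIV :: 'a set) = Q ^ e" and "2 \<le> Q" and "2 \<le> e"
    and eigen: "\<And>i. \<alpha> ^ Q ^ Suc i = l * \<alpha> ^ Q ^ i"
  shows False
proof -
  have "\<alpha> \<noteq> 0"
    using assms(1) by (simp add: primitive_elem_def)
  have orbit: "\<alpha> ^ Q ^ j = l ^ j * \<alpha>" for j
  proof (induction j)
    case (Suc j)
    then show ?case
      by (simp only: eigen) simp
  qed simp
  have "l ^ e * \<alpha> = 1 * \<alpha>"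
    using orbit[of e] power_card_UNIV_eq_self[of \<alpha>] assms(2) by simp
  then have "l ^ e = 1"
    using \<open>\<alpha> \<noteq> 0\<close> by (rule mult_right_cancel[THEN iffD1, rotated])
  have "\<alpha> ^ (Q - 1) * \<alpha> = l * \<alpha>"
    using orbit[of 1] assms(3) by (simp flip: power_Suc2)
  then have "\<alpha> ^ (Q - 1) = l"
    using \<open>\<alpha> \<noteq> 0\<close> by simp
  then have "\<alpha> ^ ((Q - 1) * e) = 1"
    using \<open>l ^ e = 1\<close> by (simp add: power_mult)
  moreover have "(Q - 1) * e > 0"
    using assms(3,4) by simp
  ultimately have "Q ^ e - 1 \<le> (Q - 1) * e"
    using primitive_elem_card_le_if_power_eq_1[OF assms(1)] assms(2) by metis
  then show False
    using mult_pred_less_power_pred[OF assms(3,4)] by (simp add: mult.commute)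
qed

lemma primitive_elem_not_Frobenius_square_eigenvector:
  fixes \<alpha> l :: "'a :: {field,finite}"
  assumes prim: "primitive_elem \<alpha>" and card: "card (UNIV :: 'a set) = q ^ 4" and "2 \<le> q"
    and eigen: "\<And>i. \<alpha> ^ q ^ Suc (Suc i) = l * \<alpha> ^ q ^ i"
  shows False
proof (rule primitive_elem_not_Frobenius_eigenvector[OF prim])
  show "card (UNIV :: 'a set) = (q ^ 2) ^ 2"
    using card by (simp flip: power_mult)
  show "2 \<le> q ^ 2"
    using \<open>2 \<le> q\<close> power_increasing[of 1 2 q] by simp
  show "\<alpha> ^ (q ^ 2) ^ Suc i = l * \<alpha> ^ (q ^ 2) ^ i" for i
    using eigen[of "2 * i"]
    by (simp only: power_mult[symmetric] mult_Suc_right add_2_eq_Suc)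
qed simp

lemma Frobenius_orbit_periodic:
  fixes \<alpha> :: "'a :: {field,finite}"
  assumes "card (UNIV :: 'a set) = q ^ n"
  shows "\<alpha> ^ q ^ (i + n) = \<alpha> ^ q ^ i"
  using power_card_UNIV_eq_self[of "\<alpha> ^ q ^ i"] assms by (simp add: power_add power_mult)

lemma periodic_seq_relation:
  fixes a :: "nat \<Rightarrow> 'a"
  assumes base: "\<And>t. t < n \<Longrightarrow> R (a t) (a (Suc t)) (a (Suc (Suc t)))"
    and periodic: "\<And>i. a (i + n) = a i" and "n > 0"
  shows "R (a t) (a (Suc t)) (a (Suc (Suc t)))"
proof (induction t rule: less_induct)
  case (less t)
  show ?case
  proof (cases "t < n")
    case False
    then obtain s where "t = s + n"
      using le_add_diff_inverse2 by (metis not_less)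
    moreover have "R (a s) (a (Suc s)) (a (Suc (Suc s)))"
      using less \<open>n > 0\<close> \<open>t = s + n\<close> by simp
    ultimately show ?thesis
      using periodic[of s] periodic[of "Suc s"] periodic[of "Suc (Suc s)"] by simp
  qed (rule base)
qed

lemma Frobenius_cyclic_relation_coeffs_fixed:
  fixes a :: "nat \<Rightarrow> 'a :: field"
  assumes frob_add: "\<And>x y :: 'a. (x + y) ^ q = x ^ q + y ^ q" and "q > 0"
    and a_Suc: "\<And>i. a (Suc i) = a i ^ q" and "a n = a 0" and "n > 0" and "a 0 \<noteq> 0"
    and rel: "\<And>i. c * a i + b * a (Suc i) + a (Suc (Suc i)) = 0"
    and not_eigen: "\<And>l. \<exists>i. a (Suc i) \<noteq> l * a i"
  shows "b ^ q = b \<and> c ^ q = c"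
proof -
  define u v where "u = c ^ q - c" and "v = b ^ q - b"
  have shifted: "u * a (Suc i) + v * a (Suc (Suc i)) = 0" for i
  proof -
    have "(c * a i + b * a (Suc i) + a (Suc (Suc i))) ^ q = 0"
      using rel \<open>q > 0\<close> by simp
    then have "c ^ q * a (Suc i) + b ^ q * a (Suc (Suc i)) + a (Suc (Suc (Suc i))) = 0"
      by (simp only: frob_add power_mult_distrib flip: a_Suc)
    moreover have "u * a (Suc i) + v * a (Suc (Suc i)) =
        (c ^ q * a (Suc i) + b ^ q * a (Suc (Suc i)) + a (Suc (Suc (Suc i))))
        - (c * a (Suc i) + b * a (Suc (Suc i)) + a (Suc (Suc (Suc i))))"
      unfolding u_def v_def by (simp add: algebra_simps)
    ultimately show ?thesis
      using rel[of "Suc i"] by simp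
  qed
  have periodic: "a (i + n) = a i" for i
    by (induction i) (simp_all add: \<open>a n = a 0\<close> a_Suc)
  have linear: "u * a i + v * a (Suc i) = 0" for i
    using shifted[of "i + n - 1"] \<open>n > 0\<close> periodic[of i] periodic[of "Suc i"] by simp
  have "v = 0"
  proof (rule ccontr)
    assume "v \<noteq> 0"
    then have "a (Suc i) = (- u / v) * a i" for i
      using linear[of i] by (simp add: field_simps add_eq_0_iff)
    then show False
      using not_eigen by blast
  qed
  moreover from this have "u = 0"
    using linear[of 0] \<open>a 0 \<noteq> 0\<close> by simp
  ultimately show ?thesis
    unfolding u_def v_def by simp
qed

lemma mod_4_eq_1_if_fixed_square_root_of_minus_1:
  fixes c :: "'a :: field"
  assumes "c ^ 2 = -1" and "c + c \<noteq> 0" and "c ^ q = c"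
  shows "q mod 4 = 1"
proof -
  have "c ^ 4 = (c ^ 2) ^ 2"
    by (simp flip: power_mult)
  then have "c ^ 4 = 1"
    using assms(1) by simp
  have "c ^ q = c ^ (4 * (q div 4) + q mod 4)"
    by simp
  also have "\<dots> = c ^ (q mod 4)"
    by (simp only: power_add power_mult \<open>c ^ 4 = 1\<close> power_one mult_1)
  finally have c_mod: "c ^ (q mod 4) = c"
    using assms(3) by simp
  have "c + c = c * (1 + 1)"
    by (simp add: distrib_left)
  then have "1 + 1 \<noteq> (0 :: 'a)"
    using assms(2) by auto
  then have "c \<noteq> 1"
    using assms(1) by auto
  have "q mod 4 < 4"
    by simp
  then consider "q mod 4 = 0" | "q mod 4 = 1" | "q mod 4 = 2" | "q mod 4 = 3"
    by linarith
  then show ?thesis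
  proof cases
    case 1
    then show ?thesis
      using c_mod \<open>c \<noteq> 1\<close> by simp
  next
    case 3
    then have "c * c = c * 1"
      using c_mod by (simp add: power2_eq_square)
    moreover have "c \<noteq> 0"
      using assms(1) by auto
    ultimately show ?thesis
      using \<open>c \<noteq> 1\<close> by simp
  next
    case 4
    then have "c ^ 2 * c = c"
      using c_mod by (simp add: power2_eq_square power3_eq_cube)
    then show ?thesis
      using assms(1,2) by simp
  qed
qed

lemma poly_eq_of_degree_le_2:
  "degree p \<le> 2 \<Longrightarrow> p = [:coeff p 0, coeff p 1, coeff p 2:]"
  by (rule poly_eqI) (auto simp: coeff_pCons coeff_eq_0 numeral_2_eq_2 split: nat.split)

lemma degree_x_power_minus_1:
  assumes "n > 0"
  shows "degree (monom 1 n - 1 :: 'a :: field poly) = n"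
proof (rule antisym)
  show "degree (monom 1 n - 1 :: 'a poly) \<le> n"
    by (rule degree_le) (use assms in auto)
  show "n \<le> degree (monom 1 n - 1 :: 'a poly)"
    by (rule le_degree) (use assms in auto)
qed

lemma x_power_4_minus_1: "(monom 1 4 - 1 :: 'a :: field poly) = [:-1, 0, 0, 0, 1:]"
  by (simp add: numeral_eq_Suc monom_Suc monom_0 one_pCons diff_pCons)

lemma degree_g_poly_le: "degree (g_poly q n \<alpha>) \<le> n - 1"
  unfolding g_poly_def by (intro degree_sum_le) (auto intro: order.trans[OF degree_monom_le])

lemma coeff_g_poly_leading:
  assumes "n > 0"
  shows "coeff (g_poly q n \<alpha>) (n - 1) = \<alpha>"
proof -
  have "coeff (g_poly q n \<alpha>) (n - 1) = (\<Sum>i<n. if i = 0 then \<alpha> ^ q ^ i else 0)"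
    unfolding g_poly_def coeff_sum coeff_monom by (rule sum.cong) (use assms in auto)
  also have "\<dots> = \<alpha>"
    using assms by simp
  finally show ?thesis .
qed

lemma g_poly_3: "g_poly q 3 \<alpha> = [:\<alpha> ^ q ^ 2, \<alpha> ^ q, \<alpha>:]"
  by (simp add: g_poly_def numeral_3_eq_3 lessThan_Suc monom_Suc monom_0 eval_nat_numeral)

lemma g_poly_4: "g_poly q 4 \<alpha> = [:\<alpha> ^ q ^ 3, \<alpha> ^ q ^ 2, \<alpha> ^ q, \<alpha>:]"
  by (simp add: g_poly_def numeral_eq_Suc lessThan_Suc monom_Suc monom_0 eval_nat_numeral)

lemma k_normal_cofactors:
  fixes \<alpha> :: "'a :: field_gcd"
  assumes "k_normal q n d \<alpha>" and "n > 0" and "\<alpha> \<noteq> 0"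
  obtains h k where "h dvd monom 1 n - 1" and "g_poly q n \<alpha> * h = k * (monom 1 n - 1)"
    and "degree h = n - d" and "degree k + d \<le> n - 1"
proof -
  define P G where "P = (monom 1 n - 1 :: 'a poly)" and "G = g_poly q n \<alpha>"
  obtain h where h: "P = gcd P G * h"
    by (meson gcd_dvd1 dvdE)
  obtain k where k: "G = gcd P G * k"
    by (meson gcd_dvd2 dvdE)
  have "degree P = n"
    unfolding P_def by (rule degree_x_power_minus_1[OF assms(2)])
  then have "P \<noteq> 0"
    using assms(2) by auto
  have "G \<noteq> 0"
    using coeff_g_poly_leading[OF assms(2), of q \<alpha>] assms(3) unfolding G_def by auto
  then have "gcd P G \<noteq> 0" and "h \<noteq> 0" and "k \<noteq> 0"
    using \<open>P \<noteq> 0\<close> h k by auto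
  have "degree (gcd P G) = d"
    using assms(1) unfolding k_normal_def P_def G_def .
  then have "d + degree h = n"
    using h \<open>degree P = n\<close> \<open>gcd P G \<noteq> 0\<close> \<open>h \<noteq> 0\<close> by (metis degree_mult_eq)
  moreover have "d + degree k \<le> n - 1"
    using k degree_g_poly_le[of q n \<alpha>] \<open>degree (gcd P G) = d\<close> \<open>gcd P G \<noteq> 0\<close> \<open>k \<noteq> 0\<close>
    by (metis G_def degree_mult_eq)
  moreover have "G * h = k * P"
    by (subst k, subst h) (simp add: algebra_simps)
  moreover have "h dvd P"
    using h by (metis dvd_triv_right)
  ultimately show ?thesis
    by (intro that[of h k]) (auto simp: P_def G_def)
qed

text \<open>Reduction modulo \<open>x^n - 1\<close> adds coefficient \<open>i + n\<close> to coefficient \<open>i\<close>; for products of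
  degree below \<open>2 n\<close> this reads \<open>g\<^sub>\<alpha> h \<equiv> 0 (mod x^n - 1)\<close> off coefficientwise.\<close>

lemma coeff_mult_x_power_minus_1_fold:
  fixes k :: "'a :: comm_ring_1 poly"
  assumes "degree k < n" and "i < n"
  shows "coeff (k * (monom 1 n - 1)) i + coeff (k * (monom 1 n - 1)) (i + n) = 0"
proof -
  have "coeff k (i + n) = 0"
    using assms(1) by (simp add: coeff_eq_0)
  then show ?thesis
    using assms(2) by (simp add: right_diff_distrib mult.commute[of k] coeff_monom_mult)
qed

lemma monic_quadratic_dvd_x_power_4_minus_1:
  fixes b c :: "'a :: field"
  assumes "[:c, b, 1:] dvd [:-1, 0, 0, 0, 1:]"
  shows "b = 0 \<or> c ^ 2 = -1 \<and> c + c \<noteq> 0"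
proof -
  obtain r where r: "[:-1, 0, 0, 0, 1:] = [:c, b, 1:] * r"
    using assms by (elim dvdE)
  then have "r \<noteq> 0"
    by auto
  have "4 = degree ([:c, b, 1:] * r)"
    by (simp only: r[symmetric]) simp
  also have "\<dots> = 2 + degree r"
    using \<open>r \<noteq> 0\<close> by (subst degree_mult_eq) simp_all
  finally obtain r0 r1 r2 where r_eq: "r = [:r0, r1, r2:]"
    using poly_eq_of_degree_le_2[of r] by simp
  from r have "[:-1, 0, 0, 0, 1:] = [:c, b, 1:] * [:r0, r1, r2:]"
    unfolding r_eq .
  then have "c * r0 = -1" and "c * r1 + b * r0 = 0" and "r0 + b * r1 + c * r2 = 0"
    and "r1 + b * r2 = 0" and "r2 = 1"
    by (auto simp: algebra_simps)
  moreover from this have "r1 = - b" and "r0 = b ^ 2 - c"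
    by (simp_all add: add_eq_0_iff2 algebra_simps power2_eq_square)
  ultimately have "b * (b ^ 2 - (c + c)) = 0" and "c * (b ^ 2 - c) = -1"
    by (simp_all add: algebra_simps power2_eq_square)
  show ?thesis
  proof (cases "b = 0")
    case False
    with \<open>b * (b ^ 2 - (c + c)) = 0\<close> have "b ^ 2 = c + c"
      by (simp only: mult_eq_0_iff right_minus_eq) blast
    then have "c * c = -1"
      using \<open>c * (b ^ 2 - c) = -1\<close> by simp
    then show ?thesis
      using False by (simp add: power2_eq_square flip: \<open>b ^ 2 = c + c\<close>)
  qed simp
qed

lemma primitive_elem_not_2_normal_degree_3:
  fixes \<alpha> :: "'a :: {field_gcd,finite}"
  assumes prim: "primitive_elem \<alpha>" and "2 \<le> q" and card: "card (UNIV :: 'a set) = q ^ 3"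
    and "k_normal q 3 2 \<alpha>"
  shows False
proof -
  have "\<alpha> \<noteq> 0"
    using prim by (simp add: primitive_elem_def)
  obtain h k where gh: "g_poly q 3 \<alpha> * h = k * (monom 1 3 - 1)"
    and "degree h = 1" and "degree k = 0"
    by (rule k_normal_cofactors[OF assms(4) _ \<open>\<alpha> \<noteq> 0\<close>]) (auto intro!: that)
  define h0 h1 where "h0 = coeff h 0" and "h1 = coeff h 1"
  have "h1 \<noteq> 0"
    using \<open>degree h = 1\<close> leading_coeff_0_iff[of h] unfolding h1_def by auto
  have "h = [:h0, h1:]"
    using poly_eq_of_degree_le_2[of h] \<open>degree h = 1\<close> unfolding h0_def h1_def by (simp add: coeff_eq_0)
  define a where "a i = \<alpha> ^ q ^ i" for i
  have periodic: "a (i + 3) = a i" for i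
    unfolding a_def by (rule Frobenius_orbit_periodic[OF card])
  have gh_eq: "g_poly q 3 \<alpha> * h = [:a 2, a 1, a 0:] * [:h0, h1:]"
    unfolding g_poly_3 \<open>h = _\<close> a_def by simp
  have fold: "coeff (g_poly q 3 \<alpha> * h) i + coeff (g_poly q 3 \<alpha> * h) (i + 3) = 0" if "i < 3" for i
    unfolding gh using that \<open>degree k = 0\<close> by (intro coeff_mult_x_power_minus_1_fold) auto
  have "h0 * a 0 + h1 * a 1 = 0" and "h0 * a 1 + h1 * a 2 = 0" and "h0 * a 2 + h1 * a 3 = 0"
    using fold[of 2] fold[of 1] fold[of 0] periodic[of 0]
    unfolding gh_eq by (simp_all add: numeral_eq_Suc algebra_simps)
  then have base: "h0 * a t + h1 * a (Suc t) = 0" if "t < 3" for t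
    using that by (auto simp: less_Suc_eq numeral_3_eq_3 numeral_2_eq_2)
  have "h0 * a t + h1 * a (Suc t) = 0" for t
    using periodic_seq_relation[where R = "\<lambda>x y z. h0 * x + h1 * y = 0", OF base periodic] by simp
  then have "\<alpha> ^ q ^ Suc i = (- h0 / h1) * \<alpha> ^ q ^ i" for i
    using \<open>h1 \<noteq> 0\<close> unfolding a_def by (simp add: field_simps add_eq_0_iff2)
  from primitive_elem_not_Frobenius_eigenvector[OF prim card \<open>2 \<le> q\<close> _ this] show False
    by simp
qed

lemma k_normal_2_degree_4_cyclic_relation:
  fixes \<alpha> :: "'a :: {field_gcd,finite}"
  assumes "k_normal q 4 2 \<alpha>" and "\<alpha> \<noteq> 0" and card: "card (UNIV :: 'a set) = q ^ 4"
  obtains b c where "[:c, b, 1:] dvd [:-1, 0, 0, 0, 1:]"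
    and "\<And>i. c * \<alpha> ^ q ^ i + b * \<alpha> ^ q ^ Suc i + \<alpha> ^ q ^ Suc (Suc i) = 0"
proof -
  obtain h k where "h dvd monom 1 4 - 1" and gh: "g_poly q 4 \<alpha> * h = k * (monom 1 4 - 1)"
    and "degree h = 2" and "degree k \<le> 1"
    by (rule k_normal_cofactors[OF assms(1) _ \<open>\<alpha> \<noteq> 0\<close>]) (auto intro!: that)
  define h2 c b where "h2 = coeff h 2" and "c = coeff h 0 / h2" and "b = coeff h 1 / h2"
  have "h2 \<noteq> 0"
    using \<open>degree h = 2\<close> leading_coeff_0_iff[of h] unfolding h2_def by auto
  then have h_eq: "h = smult h2 [:c, b, 1:]"
    using poly_eq_of_degree_le_2[of h] \<open>degree h = 2\<close> unfolding h2_def c_def b_def by simp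
  have "[:c, b, 1:] dvd h"
    unfolding h_eq by (rule dvd_smult[OF dvd_refl])
  then have dvd: "[:c, b, 1:] dvd [:-1, 0, 0, 0, 1:]"
    using dvd_trans \<open>h dvd _\<close> unfolding x_power_4_minus_1 by blast
  define a where "a i = \<alpha> ^ q ^ i" for i
  have periodic: "a (i + 4) = a i" for i
    unfolding a_def by (rule Frobenius_orbit_periodic[OF card])
  have gh_eq: "g_poly q 4 \<alpha> * h = smult h2 ([:a 3, a 2, a 1, a 0:] * [:c, b, 1:])"
    unfolding h_eq mult_smult_right g_poly_4 a_def by simp
  have fold: "coeff ([:a 3, a 2, a 1, a 0:] * [:c, b, 1:]) i
      + coeff ([:a 3, a 2, a 1, a 0:] * [:c, b, 1:]) (i + 4) = 0" if "i < 4" for i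
  proof -
    have "coeff (g_poly q 4 \<alpha> * h) i + coeff (g_poly q 4 \<alpha> * h) (i + 4) = 0"
      unfolding gh using that \<open>degree k \<le> 1\<close> by (intro coeff_mult_x_power_minus_1_fold) auto
    then show ?thesis
      using \<open>h2 \<noteq> 0\<close> unfolding gh_eq coeff_smult by (simp flip: distrib_left)
  qed
  have "c * a 0 + b * a 1 + a 2 = 0" and "c * a 1 + b * a 2 + a 3 = 0"
    and "c * a 2 + b * a 3 + a 4 = 0" and "c * a 3 + b * a 4 + a 5 = 0"
    using fold[of 3] fold[of 2] fold[of 1] fold[of 0] periodic[of 0] periodic[of 1]
    by (simp_all add: numeral_eq_Suc algebra_simps)
  then have base: "c * a t + b * a (Suc t) + a (Suc (Suc t)) = 0" if "t < 4" for t
    using that by (auto simp: less_Suc_eq numeral_eq_Suc)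
  have "c * a t + b * a (Suc t) + a (Suc (Suc t)) = 0" for t
    using periodic_seq_relation[where R = "\<lambda>x y z. c * x + b * y + z = 0", OF base periodic] by simp
  with dvd show ?thesis
    unfolding a_def by (rule that)
qed

lemma mod_4_eq_1_if_primitive_2_normal_degree_4:
  fixes \<alpha> :: "'a :: {field_gcd,finite}"
  assumes prim: "primitive_elem \<alpha>" and "2 \<le> q" and card: "card (UNIV :: 'a set) = q ^ 4"
    and "k_normal q 4 2 \<alpha>" and frob_add: "\<And>x y :: 'a. (x + y) ^ q = x ^ q + y ^ q"
  shows "q mod 4 = 1"
proof -
  have "\<alpha> \<noteq> 0"
    using prim by (simp add: primitive_elem_def)
  obtain b c where dvd: "[:c, b, 1:] dvd [:-1, 0, 0, 0, 1:]"
    and rel: "\<And>i. c * \<alpha> ^ q ^ i + b * \<alpha> ^ q ^ Suc i + \<alpha> ^ q ^ Suc (Suc i) = 0"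
    using k_normal_2_degree_4_cyclic_relation[OF assms(4) \<open>\<alpha> \<noteq> 0\<close> card] by blast
  have "b ^ q = b \<and> c ^ q = c"
  proof (rule Frobenius_cyclic_relation_coeffs_fixed[where a = "\<lambda>i. \<alpha> ^ q ^ i" and n = 4])
    show "\<alpha> ^ q ^ Suc i = (\<alpha> ^ q ^ i) ^ q" for i
      by (simp only: power_Suc2 power_mult)
    show "\<alpha> ^ q ^ 4 = \<alpha> ^ q ^ 0"
      using Frobenius_orbit_periodic[OF card, of \<alpha> 0] by simp
    show "\<exists>i. \<alpha> ^ q ^ Suc i \<noteq> l * \<alpha> ^ q ^ i" for l
      using primitive_elem_not_Frobenius_eigenvector[OF prim card \<open>2 \<le> q\<close>] by force
    show "c * \<alpha> ^ q ^ i + b * \<alpha> ^ q ^ Suc i + \<alpha> ^ q ^ Suc (Suc i) = 0" for i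
      by (rule rel)
  qed (use frob_add \<open>2 \<le> q\<close> \<open>\<alpha> \<noteq> 0\<close> in simp_all)
  show ?thesis
  proof (cases "b = 0")
    case True
    have "\<alpha> ^ q ^ Suc (Suc i) = (- c) * \<alpha> ^ q ^ i" for i
      using rel[of i] True by (simp add: algebra_simps eq_neg_iff_add_eq_0)
    with primitive_elem_not_Frobenius_square_eigenvector[OF prim card \<open>2 \<le> q\<close>] show ?thesis
      by blast
  next
    case False
    then have "c ^ 2 = -1" and "c + c \<noteq> 0"
      using monic_quadratic_dvd_x_power_4_minus_1[OF dvd] by simp_all
    then show ?thesis
      using mod_4_eq_1_if_fixed_square_root_of_minus_1 \<open>b ^ q = b \<and> c ^ q = c\<close> by blast
  qed
qed

theorem lemma3p1:
  fixes q n :: nat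
  assumes "\<exists>p m. prime p \<and> m > 0 \<and> q = p ^ m"
    and "n > 0"
    and "card (UNIV :: 'a set) = q ^ n"
    and "\<exists>\<alpha>::'a::{field_gcd,finite}. primitive_elem \<alpha> \<and> k_normal q n 2 \<alpha>"
  shows "n \<ge> 4 \<and> (n = 4 \<longrightarrow> q mod 4 = 1)"
proof -
  obtain p m where "prime p" and "m > 0" and q: "q = p ^ m"
    using assms(1) by blast
  obtain \<alpha> :: 'a where prim: "primitive_elem \<alpha>" and normal: "k_normal q n 2 \<alpha>"
    using assms(4) by blast
  have "2 \<le> p"
    using \<open>prime p\<close> by (rule prime_ge_2_nat)
  then have "2 \<le> q"
    using \<open>m > 0\<close> self_le_power[of p m] unfolding q by simp
  have "\<alpha> \<noteq> 0"
    using prim by (simp add: primitive_elem_def)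
  have "n \<ge> 3"
    using k_normal_cofactors[OF normal assms(2) \<open>\<alpha> \<noteq> 0\<close>] by fastforce
  moreover have "n \<noteq> 3"
    using primitive_elem_not_2_normal_degree_3[OF prim \<open>2 \<le> q\<close>] assms(3) normal by blast
  moreover have "q mod 4 = 1" if "n = 4"
  proof (rule mod_4_eq_1_if_primitive_2_normal_degree_4[OF prim \<open>2 \<le> q\<close>])
    show "(x + y) ^ q = x ^ q + y ^ q" for x y :: 'a
      using assms(3) by (intro Frobenius_add[OF \<open>prime p\<close> _ q, of "m * n"]) (simp add: q power_mult)
  qed (use assms(3) normal that in simp_all)
  ultimately show ?thesis
    by auto
qed

end
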